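(* Let $\mathsf{M}_1,\mathsf{M}_2$ be two unbiased dichotomic qubit measurements, i.e. $\mathsf{M}_1(\pm1)=\frac12(I\pm\vec a\cdot\vec\sigma)$ and $\mathsf{M}_2(\pm1)=\frac12(I\pm\vec b\cdot\vec\sigma)$ with $\vec a,\vec b\in\mathbb{R}^3$, $\|\vec a\|,\|\vec b\|\leq1$. Then $\mathsf{M}_1$ and $\mathsf{M}_2$ are incompatible if and only if they are useful for $(2,2)$-QRAC, i.e. if and only if $$\frac{1}{8}\sum_{x,y=\pm1}\big\|\mathsf{M}_1(x)+\mathsf{M}_2(y)\big\|>\frac34 .$$
   Context: $\vec\sigma=(\sigma_1,\sigma_2,\sigma_3)$ are the Pauli matrices, $I$ the identity on $\mathbb{C}^2$, and $\|\cdot\|$ the operator norm. Two POVMs are compatible if there is a POVM $\mathsf{G}(x,y)$ whose marginals $\sum_y\mathsf{G}(x,y)$ and $\sum_x\mathsf{G}(x,y)$ are $\mathsf{M}_1(x)$ and $\mathsf{M}_2(y)$; otherwise incompatible. The left-hand side of the displayed inequality is the optimal average success probability $\bar P_{\rm qrac}(\mathsf{M}_1,\mathsf{M}_2)$ in the $(2,2)$ quantum random access code, and $3/4$ is the optimal classical $(2,2)$ random access code success probability. *)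

theory Defs
  imports "HOL-Analysis.Analysis"
begin

definition mat2 :: "complex \<Rightarrow> complex \<Rightarrow> complex \<Rightarrow> complex \<Rightarrow> complex^2^2" where
  "mat2 p q r s = (\<chi> i j. if i = 1 then (if j = 1 then p else q) else (if j = 1 then r else s))"

definition sigma1 :: "complex^2^2" where "sigma1 = mat2 0 1 1 0"
definition sigma2 :: "complex^2^2" where "sigma2 = mat2 0 (-\<i>) \<i> 0"
definition sigma3 :: "complex^2^2" where "sigma3 = mat2 1 0 0 (-1)"

definition sigma_dot :: "real^3 \<Rightarrow> complex^2^2" where
  "sigma_dot a = (a$1) *\<^sub>R sigma1 + (a$2) *\<^sub>R sigma2 + (a$3) *\<^sub>R sigma3"

definition dich :: "real^3 \<Rightarrow> int \<Rightarrow> complex^2^2" where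
  "dich a x = (1/2::real) *\<^sub>R (mat 1 + (of_int x :: real) *\<^sub>R sigma_dot a)"

definition opnorm :: "complex^2^2 \<Rightarrow> real" where
  "opnorm A = onorm (\<lambda>v. A *v v)"

definition psd :: "complex^2^2 \<Rightarrow> bool" where
  "psd A \<longleftrightarrow> (\<forall>v::complex^2. let z = (\<Sum>i\<in>UNIV. cnj (v$i) * (A *v v)$i) in Im z = 0 \<and> Re z \<ge> 0)"

definition compatible :: "(int \<Rightarrow> complex^2^2) \<Rightarrow> (int \<Rightarrow> complex^2^2) \<Rightarrow> bool" where
  "compatible M1 M2 \<longleftrightarrow> (\<exists>G :: int \<Rightarrow> int \<Rightarrow> complex^2^2.
      (\<forall>x\<in>{-1,1}. \<forall>y\<in>{-1,1}. psd (G x y)) \<and>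
      (\<Sum>x\<in>{-1,1}. \<Sum>y\<in>{-1,1}. G x y) = mat 1 \<and>
      (\<forall>x\<in>{-1,1}. (\<Sum>y\<in>{-1,1}. G x y) = M1 x) \<and>
      (\<forall>y\<in>{-1,1}. (\<Sum>x\<in>{-1,1}. G x y) = M2 y))"

end

theory Submission
  imports Defs
begin

(* Every Hermitian qubit operator is c I + u.sigma; for c >= 0 its operator norm is c + |u|,
   and it is positive as soon as |u| <= c.  Hence ||M1(x) + M2(y)|| = 1 + |x a + y b|/2, and the
   QRAC score equals 1/2 + (|a + b| + |a - b|)/8, which exceeds 3/4 iff |a + b| + |a - b| > 2.
   By Busch's criterion the latter is exactly incompatibility: if |a + b| + |a - b| <= 2, then
   G(x,y) = ((1 + x y g) I + (x a + y b).sigma)/4 with g = (|a + b| - |a - b|)/2 is a joint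
   measurement; conversely, pairing the four effects of a joint measurement with the positive
   operators I -+ u.sigma, I -+ w.sigma, for u, w the unit vectors along a + b and a - b, yields
   0 <= 2 - |a + b| - |a - b|. *)

lemma sigma_dot_nth:
  "sigma_dot u $ 1 $ 1 = complex_of_real (u$3)"
  "sigma_dot u $ 1 $ 2 = complex_of_real (u$1) - \<i> * complex_of_real (u$2)"
  "sigma_dot u $ 2 $ 1 = complex_of_real (u$1) + \<i> * complex_of_real (u$2)"
  "sigma_dot u $ 2 $ 2 = - complex_of_real (u$3)"
  by (simp_all add: sigma_dot_def sigma1_def sigma2_def sigma3_def mat2_def scaleR_conv_of_real[where 'a=complex])

lemma mat_1_nth_2:
  "(mat 1 :: complex^2^2) $ 1 $ 1 = 1" "(mat 1 :: complex^2^2) $ 1 $ 2 = 0"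
  "(mat 1 :: complex^2^2) $ 2 $ 1 = 0" "(mat 1 :: complex^2^2) $ 2 $ 2 = 1"
  by (simp_all add: mat_def)

lemma matrix_vector_mult_nth_2:
  "(A *v (v::complex^2)) $ 1 = A$1$1 * v$1 + A$1$2 * v$2"
  "(A *v (v::complex^2)) $ 2 = A$2$1 * v$1 + A$2$2 * v$2"
  by (simp_all add: matrix_vector_mult_def sum_2)

lemma norm_vec2_power2: "(norm (v::complex^2))\<^sup>2 = (cmod (v$1))\<^sup>2 + (cmod (v$2))\<^sup>2"
  by (simp add: norm_vec_def L2_set_def sum_2)

lemma norm_vec3_power2: "(norm (u::real^3))\<^sup>2 = (u$1)\<^sup>2 + (u$2)\<^sup>2 + (u$3)\<^sup>2"
  by (simp add: norm_vec_def L2_set_def sum_3)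

lemma scaleR_matrix_vector_mult:
  fixes A :: "'a::real_algebra_1^'n^'m"
  shows "(c *\<^sub>R A) *v v = c *\<^sub>R (A *v v)"
  by (simp add: vec_eq_iff matrix_vector_mult_def scaleR_sum_right)

lemma matrix_vector_mult_scaleR':
  fixes A :: "'a::real_algebra_1^'n^'m"
  shows "A *v (c *\<^sub>R v) = c *\<^sub>R (A *v v)"
  by (simp add: vec_eq_iff matrix_vector_mult_def scaleR_sum_right)

lemma sigma_dot_add: "sigma_dot (u + v) = sigma_dot u + sigma_dot v"
  by (simp add: sigma_dot_def scaleR_add_left algebra_simps)

lemma sigma_dot_scaleR: "sigma_dot (c *\<^sub>R u) = c *\<^sub>R sigma_dot u"
  by (simp add: sigma_dot_def scaleR_add_right)

lemma norm_sigma_dot_mult: "norm (sigma_dot u *v v) = norm u * norm v"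
proof -
  have "(norm (sigma_dot u *v v))\<^sup>2 = (norm u * norm v)\<^sup>2"
    unfolding power_mult_distrib norm_vec2_power2 norm_vec3_power2 matrix_vector_mult_nth_2
      sigma_dot_nth cmod_power2
    by (simp add: algebra_simps power2_eq_square)
  then show ?thesis
    by (simp add: power2_eq_iff_nonneg)
qed

lemma sigma_dot_mult_self: "sigma_dot u *v (sigma_dot u *v v) = (norm u)\<^sup>2 *\<^sub>R v"
  using norm_vec3_power2[of u]
  by (simp add: vec_eq_iff forall_2 matrix_vector_mult_nth_2 sigma_dot_nth algebra_simps
      scaleR_conv_of_real[where 'a=complex] power2_eq_square)

lemma sigma_dot_eigenvector:
  obtains v where "v \<noteq> 0" "sigma_dot u *v v = norm u *\<^sub>R v"
proof (cases "u = 0")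
  case True
  then show ?thesis
    using that[of "axis 1 1"] by (simp add: sigma_dot_def axis_eq_0_iff)
next
  case False
  define r where "r = norm u"
  have eig: "sigma_dot u *v (sigma_dot u *v w + r *\<^sub>R w) = r *\<^sub>R (sigma_dot u *v w + r *\<^sub>R w)" for w
    by (simp add: matrix_vector_right_distrib matrix_vector_mult_scaleR' sigma_dot_mult_self
        r_def algebra_simps power2_eq_square)
  have "sigma_dot u *v axis 1 1 + r *\<^sub>R axis 1 1 \<noteq> 0 \<or> sigma_dot u *v axis 2 1 + r *\<^sub>R axis 2 1 \<noteq> 0"
  proof (rule ccontr)
    assume "\<not> ?thesis"
    then have "(sigma_dot u *v axis 1 1 + r *\<^sub>R axis 1 1) $ 1 = 0"
      "(sigma_dot u *v axis 2 1 + r *\<^sub>R axis 2 1) $ 2 = 0"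
      by simp_all
    then have "u$3 + r = 0" "r - u$3 = 0"
      by (simp_all add: matrix_vector_mult_nth_2 sigma_dot_nth axis_def complex_eq_iff
          scaleR_conv_of_real[where 'a=complex])
    with False show False
      unfolding r_def by simp
  qed
  then show ?thesis
    using eig that r_def by blast
qed

definition bloch_op :: "real \<Rightarrow> real^3 \<Rightarrow> complex^2^2" where
  "bloch_op c u = c *\<^sub>R mat 1 + sigma_dot u"

lemma bloch_op_mult: "bloch_op c u *v v = c *\<^sub>R v + sigma_dot u *v v"
  by (simp add: bloch_op_def matrix_vector_mult_add_rdistrib scaleR_matrix_vector_mult)

lemma bloch_op_add: "bloch_op c u + bloch_op d v = bloch_op (c + d) (u + v)"
  by (simp add: bloch_op_def sigma_dot_add scaleR_add_left)

lemma bloch_op_1_0: "bloch_op 1 0 = mat 1"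
  by (simp add: bloch_op_def sigma_dot_def)

lemma dich_eq_bloch_op: "dich a x = bloch_op (1/2) ((of_int x / 2) *\<^sub>R a)"
  by (simp add: dich_def bloch_op_def sigma_dot_scaleR scaleR_add_right)

lemma dich_add_dich: "dich a x + dich b y = bloch_op 1 ((1/2) *\<^sub>R (of_int x *\<^sub>R a + of_int y *\<^sub>R b))"
  by (simp add: dich_eq_bloch_op bloch_op_add scaleR_add_right)

lemma opnorm_bloch_op:
  assumes "0 \<le> c"
  shows "opnorm (bloch_op c u) = c + norm u"
proof (rule antisym)
  have "norm (bloch_op c u *v v) \<le> (c + norm u) * norm v" for v
  proof -
    have "norm (bloch_op c u *v v) \<le> norm (c *\<^sub>R v) + norm (sigma_dot u *v v)"
      unfolding bloch_op_mult by (rule norm_triangle_ineq)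
    also have "\<dots> = (c + norm u) * norm v"
      using assms by (simp add: norm_sigma_dot_mult algebra_simps)
    finally show ?thesis .
  qed
  then show "opnorm (bloch_op c u) \<le> c + norm u"
    unfolding opnorm_def by (rule onorm_le)
next
  obtain v where v: "v \<noteq> 0" "sigma_dot u *v v = norm u *\<^sub>R v"
    by (rule sigma_dot_eigenvector)
  have "(c + norm u) * norm v = norm (bloch_op c u *v v)"
    using assms by (simp add: bloch_op_mult v(2) scaleR_add_left[symmetric])
  also have "\<dots> \<le> opnorm (bloch_op c u) * norm v"
    unfolding opnorm_def by (rule onorm) simp
  finally show "c + norm u \<le> opnorm (bloch_op c u)"
    using v(1) by simp
qed

lemma Re_sum_cnj_mult: "Re (\<Sum>i\<in>UNIV. cnj (v$i) * w$i) = v \<bullet> (w :: complex^'n)"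
  by (simp add: inner_vec_def inner_complex_def)

lemma psd_bloch_op:
  assumes "norm u \<le> c"
  shows "psd (bloch_op c u)"
  unfolding psd_def Let_def
proof (intro allI conjI)
  fix v :: "complex^2"
  show "Im (\<Sum>i\<in>UNIV. cnj (v$i) * (bloch_op c u *v v)$i) = 0"
    by (simp add: sum_2 bloch_op_def matrix_vector_mult_nth_2 sigma_dot_nth mat_1_nth_2
        scaleR_conv_of_real[where 'a=complex] algebra_simps)
  have "- (norm u * (norm v)\<^sup>2) \<le> v \<bullet> (sigma_dot u *v v)"
    using Cauchy_Schwarz_ineq2[of v "sigma_dot u *v v"]
    by (simp add: norm_sigma_dot_mult power2_eq_square algebra_simps)
  moreover have "norm u * (norm v)\<^sup>2 \<le> c * (norm v)\<^sup>2"
    using assms by (simp add: mult_right_mono)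
  moreover have "Re (\<Sum>i\<in>UNIV. cnj (v$i) * (bloch_op c u *v v)$i)
      = c * (norm v)\<^sup>2 + v \<bullet> (sigma_dot u *v v)"
    unfolding Re_sum_cnj_mult by (simp add: bloch_op_mult inner_add_right power2_norm_eq_inner)
  ultimately show "0 \<le> Re (\<Sum>i\<in>UNIV. cnj (v$i) * (bloch_op c u *v v)$i)"
    by linarith
qed

lemma trace_add_mult: "trace ((A + B) ** C) = trace (A ** C) + trace (B ** (C::'a::comm_semiring_1^'n^'n))"
  by (simp add: trace_def matrix_matrix_mult_def distrib_right sum.distrib)

lemma trace_mult_sigma_dot:
  "trace (A ** sigma_dot s) = (A$1$1 - A$2$2) * complex_of_real (s$3)
     + A$1$2 * Complex (s$1) (s$2) + A$2$1 * Complex (s$1) (- s$2)"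
  by (simp add: trace_def matrix_matrix_mult_def sum_2 sigma_dot_nth complex_eq_iff algebra_simps)

lemma trace_mult_sigma_dot_uminus: "trace (A ** sigma_dot (- s)) = - trace (A ** sigma_dot s)"
  by (simp add: trace_mult_sigma_dot complex_eq_iff algebra_simps)

lemma trace_bloch_op_mult_sigma_dot: "trace (bloch_op c u ** sigma_dot s) = 2 * (u \<bullet> s)"
  by (simp add: trace_mult_sigma_dot bloch_op_def sigma_dot_nth mat_1_nth_2 inner_vec_def sum_3
      complex_eq_iff scaleR_conv_of_real[where 'a=complex] algebra_simps)

lemma trace_dich_mult_sigma_dot: "trace (dich a x ** sigma_dot s) = of_int x * (a \<bullet> s)"
  by (simp add: dich_eq_bloch_op trace_bloch_op_mult_sigma_dot)

lemma psd_trace_mult_nonneg: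
  assumes "psd G" and "norm s \<le> 1"
  shows "0 \<le> Re (trace G) + Re (trace (G ** sigma_dot s))"
proof -
  have form: "0 \<le> Re (\<Sum>i\<in>UNIV. cnj (v$i) * (G *v v)$i)" for v
    using assms(1) unfolding psd_def Let_def by blast
  have s: "(s$1)\<^sup>2 + (s$2)\<^sup>2 + (s$3)\<^sup>2 \<le> 1"
    using assms(2) norm_vec3_power2[of s] by (metis norm_ge_zero power_le_one)
  have G22: "0 \<le> Re (G$2$2)"
    using form[of "axis 2 1"] by (simp add: sum_2 matrix_vector_mult_nth_2 axis_def)
  show ?thesis
  proof (cases "s$3 = -1")
    case True
    with s have "s$1 = 0 \<and> s$2 = 0"
      by (simp add: sum_power2_le_zero_iff[symmetric])
    with True G22 show ?thesis
      unfolding trace_mult_sigma_dot by (simp add: trace_def sum_2)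
  next
    case False
    have "\<bar>s$3\<bar> \<le> 1"
      using s by (simp add: abs_square_le_1[symmetric]) (smt (verit) zero_le_power2)
    with False have pos: "0 < 1 + s$3"
      by linarith
    \<comment> \<open>\<open>v\<close> is, up to scaling, the \<open>+1\<close> eigenvector of \<open>sigma_dot s\<close> when \<open>|s| = 1\<close>;
      for shorter \<open>s\<close> the defect \<open>1 - |s|\<^sup>2\<close> is absorbed by \<open>G\<^sub>2\<^sub>2 \<ge> 0\<close>.\<close>
    define v :: "complex^2" where "v = vector [complex_of_real (1 + s$3), Complex (s$1) (s$2)]"
    have "(1 + s$3) * (Re (trace G) + Re (trace (G ** sigma_dot s)))
        = Re (\<Sum>i\<in>UNIV. cnj (v$i) * (G *v v)$i) + Re (G$2$2) * (1 - (s$1)\<^sup>2 - (s$2)\<^sup>2 - (s$3)\<^sup>2)"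
      unfolding v_def trace_mult_sigma_dot
      by (simp add: trace_def sum_2 matrix_vector_mult_nth_2 algebra_simps power2_eq_square)
    also have "\<dots> \<ge> 0"
      using form[of v] G22 s by simp
    finally show ?thesis
      using pos by (simp add: zero_le_mult_iff)
  qed
qed

lemma inner_sgn_self: "x \<bullet> sgn x = norm x"
  by (cases "x = 0") (simp_all add: sgn_div_norm inner_scaleR_right dot_square_norm power2_eq_square)

lemma norm_add_plus_norm_diff_le_if_compatible:
  assumes "compatible (dich a) (dich b)"
  shows "norm (a + b) + norm (a - b) \<le> 2"
proof -
  obtain G where psd: "\<forall>x\<in>{-1,1}. \<forall>y\<in>{-1,1}. psd (G x y)"
    and total: "(\<Sum>x\<in>{-1,1}. \<Sum>y\<in>{-1,1}. G x y) = mat 1"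
    and marg1: "\<forall>x\<in>{-1,1}. (\<Sum>y\<in>{-1,1}. G x y) = dich a x"
    and marg2: "\<forall>y\<in>{-1,1}. (\<Sum>x\<in>{-1,1}. G x y) = dich b y"
    using assms unfolding compatible_def by blast
  define u where "u = sgn (a + b)"
  define w where "w = sgn (a - b)"
  let ?T = "\<lambda>M. Re (trace M)" and ?L = "\<lambda>M s. Re (trace (M ** sigma_dot s))"
  have m1: "G (-1) (-1) + G (-1) 1 = dich a (-1)" and m2: "G 1 (-1) + G 1 1 = dich a 1"
    and m3: "G (-1) 1 + G 1 1 = dich b 1"
    and m0: "G (-1) (-1) + G (-1) 1 + (G 1 (-1) + G 1 1) = mat 1"
    using marg1 marg2 total by simp_all
  have "?L (G (-1) (-1)) u + ?L (G (-1) 1) u = - (a \<bullet> u)"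
    using arg_cong[OF m1, of "\<lambda>M. ?L M u"] by (simp add: trace_add_mult trace_dich_mult_sigma_dot)
  moreover have "?L (G 1 (-1)) w + ?L (G 1 1) w = a \<bullet> w"
    using arg_cong[OF m2, of "\<lambda>M. ?L M w"] by (simp add: trace_add_mult trace_dich_mult_sigma_dot)
  moreover have "?L (G (-1) 1) u + ?L (G 1 1) u = b \<bullet> u"
    using arg_cong[OF m3, of "\<lambda>M. ?L M u"] by (simp add: trace_add_mult trace_dich_mult_sigma_dot)
  moreover have "?L (G (-1) 1) w + ?L (G 1 1) w = b \<bullet> w"
    using arg_cong[OF m3, of "\<lambda>M. ?L M w"] by (simp add: trace_add_mult trace_dich_mult_sigma_dot)
  moreover have "?T (G (-1) (-1)) + ?T (G (-1) 1) + (?T (G 1 (-1)) + ?T (G 1 1)) = 2"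
    using arg_cong[OF m0, of ?T] by (simp add: trace_add trace_I)
  moreover have "norm u \<le> 1" "norm w \<le> 1"
    unfolding u_def w_def by (simp_all add: norm_sgn)
  with psd have "0 \<le> ?T (G 1 1) - ?L (G 1 1) u" "0 \<le> ?T (G (-1) (-1)) + ?L (G (-1) (-1)) u"
    "0 \<le> ?T (G 1 (-1)) - ?L (G 1 (-1)) w" "0 \<le> ?T (G (-1) 1) + ?L (G (-1) 1) w"
    using psd_trace_mult_nonneg[of _ "- u"] psd_trace_mult_nonneg[of _ u]
      psd_trace_mult_nonneg[of _ "- w"] psd_trace_mult_nonneg[of _ w]
    by (simp_all add: trace_mult_sigma_dot_uminus)
  moreover have "a \<bullet> u + b \<bullet> u = norm (a + b)" "a \<bullet> w - b \<bullet> w = norm (a - b)"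
    unfolding u_def w_def by (metis inner_add_left inner_sgn_self, metis inner_diff_left inner_sgn_self)
  ultimately show ?thesis
    by linarith
qed

lemma compatible_if_norm_add_plus_norm_diff_le:
  assumes "norm (a + b) + norm (a - b) \<le> 2"
  shows "compatible (dich a) (dich b)"
proof -
  define g where "g = (norm (a + b) - norm (a - b)) / 2"
  define G where "G x y = bloch_op ((1 + of_int x * of_int y * g) / 4)
      ((1/4) *\<^sub>R (of_int x *\<^sub>R a + of_int y *\<^sub>R b))" for x y :: int
  have "psd (G x y)" if "x \<in> {-1,1}" "y \<in> {-1,1}" for x y
  proof -
    have "norm (a + b) \<le> 1 + g" "norm (a - b) \<le> 1 - g"
      using assms by (simp_all add: g_def field_simps)
    moreover have "norm (- a - b) = norm (a + b)"
      using norm_minus_cancel[of "a + b"] by (simp add: algebra_simps)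
    ultimately have "norm (of_int x *\<^sub>R a + of_int y *\<^sub>R b) \<le> 1 + of_int x * of_int y * g"
      using that by (auto simp: norm_minus_commute)
    then show ?thesis
      unfolding G_def by (intro psd_bloch_op) simp
  qed
  moreover have "(\<Sum>y\<in>{-1,1}. G x y) = dich a x" for x
    unfolding G_def dich_eq_bloch_op
    by (simp add: bloch_op_add, rule arg_cong2[where f = bloch_op]) (simp_all add: vec_eq_iff field_simps)
  moreover have "(\<Sum>x\<in>{-1,1}. G x y) = dich b y" for y
    unfolding G_def dich_eq_bloch_op
    by (simp add: bloch_op_add, rule arg_cong2[where f = bloch_op]) (simp_all add: vec_eq_iff field_simps)
  moreover have "dich a (-1) + dich a 1 = mat 1"
    by (simp add: dich_eq_bloch_op bloch_op_add bloch_op_1_0)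
  ultimately show ?thesis
    unfolding compatible_def by (intro exI[of _ G]) auto
qed

lemma compatible_dich_iff: "compatible (dich a) (dich b) \<longleftrightarrow> norm (a + b) + norm (a - b) \<le> 2"
  using norm_add_plus_norm_diff_le_if_compatible compatible_if_norm_add_plus_norm_diff_le by blast

lemma opnorm_dich_add_dich:
  "opnorm (dich a x + dich b y) = 1 + norm (of_int x *\<^sub>R a + of_int y *\<^sub>R b) / 2"
  by (simp add: dich_add_dich opnorm_bloch_op)

theorem proposition2:
  fixes a b :: "real^3"
  assumes "norm a \<le> 1" and "norm b \<le> 1"
  shows "\<not> compatible (dich a) (dich b) \<longleftrightarrow>
    (1/8) * (\<Sum>x\<in>{-1::int,1}. \<Sum>y\<in>{-1::int,1}. opnorm (dich a x + dich b y)) > 3/4"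
proof -
  have "(\<Sum>x\<in>{-1::int,1}. \<Sum>y\<in>{-1::int,1}. opnorm (dich a x + dich b y))
      = 4 + norm (a + b) + norm (a - b)"
    using norm_minus_commute[of a b] norm_minus_cancel[of "a + b"]
    by (simp add: opnorm_dich_add_dich algebra_simps)
  then show ?thesis
    unfolding compatible_dich_iff by auto
qed

end
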